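(* Let $D\subset\mathbb N^n$ be finite, not contained in any coordinate hyperplane, $p$ a prime, and $\mathbf e,\mathbf e'\in\Sigma_p(D)$ with $V(\mathbf e,\mathbf e')\ne\emptyset$. Then all $V=(v_{\mathbf d})\in V(\mathbf e,\mathbf e')$ have the same weight $w(V)=\sum_{\mathbf d}v_{\mathbf d}$.
   Context: $s_p$ = base-$p$ digit sum. $E_{D,p}(r)$ = set of $U=(u_{\mathbf d})\in\{0,\dots,p^r-1\}^D$ with $\sum u_{\mathbf d}\mathbf d\equiv0\pmod{p^r-1}$ and all coordinates of $\sum u_{\mathbf d}\mathbf d$ positive; $s_p(U)=\sum s_p(u_{\mathbf d})$; $\delta_p(D)=\frac1{p-1}\min_{r\ge1}\min_{U\in E_{D,p}(r)}s_p(U)/r$; minimal means $s_p(U)=(p-1)r\delta_p(D)$. Shift $\delta_r$: $k\mapsto pk\bmod(p^r-1)$ for $k\le p^r-2$, $p^r-1\mapsto p^r-1$, coordinatewise. $\varphi_U(k)=\frac1{p^r-1}\sum\mathbf d(\delta_r^kU)_{\mathbf d}$, $k\in\mathbb Z/r\mathbb Z$; irreducible means $\varphi_U$ injective; $MI_{D,p}$ = minimal irreducible elements of all lengths; $\Sigma_p(D)=\bigcup_{U\in MI_{D,p}}\mathrm{Im}\varphi_U$. $\psi(U)=(u_{\mathbf d}\bmod p)_{\mathbf d}$; $V(\mathbf e,\mathbf e')=\{\psi(U):U\in MI_{D,p},\varphi_U(-1)=\mathbf e,\varphi_U(0)=\mathbf e'\}\subset\{0,\dots,p-1\}^D$. 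*)

theory Defs
  imports Complex_Main "HOL-Computational_Algebra.Primes"
begin

text \<open>Vectors in N^n are functions nat => nat vanishing at indices >= n.
  A tuple U indexed by D is a function (nat => nat) => nat vanishing outside D.\<close>

definition digsum :: "nat \<Rightarrow> nat \<Rightarrow> nat" where
  "digsum p k = (\<Sum>i\<le>k. (k div p ^ i) mod p)"

definition sp :: "nat \<Rightarrow> (nat \<Rightarrow> nat) set \<Rightarrow> ((nat \<Rightarrow> nat) \<Rightarrow> nat) \<Rightarrow> nat" where
  "sp p D U = (\<Sum>d\<in>D. digsum p (U d))"

definition vsum :: "(nat \<Rightarrow> nat) set \<Rightarrow> ((nat \<Rightarrow> nat) \<Rightarrow> nat) \<Rightarrow> nat \<Rightarrow> nat" where
  "vsum D U = (\<lambda>i. \<Sum>d\<in>D. U d * d i)"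

definition inE :: "nat \<Rightarrow> (nat \<Rightarrow> nat) set \<Rightarrow> nat \<Rightarrow> nat \<Rightarrow> ((nat \<Rightarrow> nat) \<Rightarrow> nat) \<Rightarrow> bool" where
  "inE n D p r U \<longleftrightarrow> r \<ge> 1 \<and> (\<forall>d\<in>D. U d \<le> p ^ r - 1) \<and> (\<forall>d. d \<notin> D \<longrightarrow> U d = 0)
     \<and> (\<forall>i<n. (p ^ r - 1) dvd vsum D U i \<and> vsum D U i > 0)"

definition delta :: "nat \<Rightarrow> (nat \<Rightarrow> nat) set \<Rightarrow> nat \<Rightarrow> real" where
  "delta n D p = Inf {real (sp p D U) / real r | r U. inE n D p r U} / real (p - 1)"

definition minimal :: "nat \<Rightarrow> (nat \<Rightarrow> nat) set \<Rightarrow> nat \<Rightarrow> nat \<Rightarrow> ((nat \<Rightarrow> nat) \<Rightarrow> nat) \<Rightarrow> bool" where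
  "minimal n D p r U \<longleftrightarrow> inE n D p r U \<and>
     real (sp p D U) = real (p - 1) * real r * delta n D p"

definition shift :: "nat \<Rightarrow> nat \<Rightarrow> nat \<Rightarrow> nat" where
  "shift p r k = (if k \<le> p ^ r - 2 then (p * k) mod (p ^ r - 1) else k)"

definition shiftU :: "nat \<Rightarrow> nat \<Rightarrow> ((nat \<Rightarrow> nat) \<Rightarrow> nat) \<Rightarrow> ((nat \<Rightarrow> nat) \<Rightarrow> nat)" where
  "shiftU p r U = (\<lambda>d. shift p r (U d))"

text \<open>phi_U(k) for k in Z/rZ, represented by k mod r.\<close>
definition phi :: "(nat \<Rightarrow> nat) set \<Rightarrow> nat \<Rightarrow> nat \<Rightarrow> ((nat \<Rightarrow> nat) \<Rightarrow> nat) \<Rightarrow> nat \<Rightarrow> (nat \<Rightarrow> nat)" where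
  "phi D p r U k = (\<lambda>i. vsum D ((shiftU p r ^^ (k mod r)) U) i div (p ^ r - 1))"

definition irreducible_el :: "(nat \<Rightarrow> nat) set \<Rightarrow> nat \<Rightarrow> nat \<Rightarrow> ((nat \<Rightarrow> nat) \<Rightarrow> nat) \<Rightarrow> bool" where
  "irreducible_el D p r U \<longleftrightarrow> inj_on (phi D p r U) {..<r}"

definition MI :: "nat \<Rightarrow> (nat \<Rightarrow> nat) set \<Rightarrow> nat \<Rightarrow> (nat \<times> ((nat \<Rightarrow> nat) \<Rightarrow> nat)) set" where
  "MI n D p = {(r, U). minimal n D p r U \<and> irreducible_el D p r U}"

definition Sigma_p :: "nat \<Rightarrow> (nat \<Rightarrow> nat) set \<Rightarrow> nat \<Rightarrow> (nat \<Rightarrow> nat) set" where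
  "Sigma_p n D p = (\<Union>(r, U)\<in>MI n D p. phi D p r U ` {..<r})"

definition psi :: "nat \<Rightarrow> ((nat \<Rightarrow> nat) \<Rightarrow> nat) \<Rightarrow> ((nat \<Rightarrow> nat) \<Rightarrow> nat)" where
  "psi p U = (\<lambda>d. U d mod p)"

text \<open>phi_U(-1) is phi_U(r-1) since k ranges over Z/rZ.\<close>
definition Vset :: "nat \<Rightarrow> (nat \<Rightarrow> nat) set \<Rightarrow> nat \<Rightarrow> (nat \<Rightarrow> nat) \<Rightarrow> (nat \<Rightarrow> nat)
     \<Rightarrow> ((nat \<Rightarrow> nat) \<Rightarrow> nat) set" where
  "Vset n D p e e' = {psi p U | r U. (r, U) \<in> MI n D p \<and> phi D p r U (r - 1) = e \<and> phi D p r U 0 = e'}"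

definition weight :: "(nat \<Rightarrow> nat) set \<Rightarrow> ((nat \<Rightarrow> nat) \<Rightarrow> nat) \<Rightarrow> nat" where
  "weight D V = (\<Sum>d\<in>D. V d)"

end

theory Submission
  imports Defs
begin

text \<open>Write \<open>M = p^r - 1\<close>. Undoing one shift multiplies each entry by \<open>p\<close> modulo \<open>M\<close>, and the
  carry is exactly the last base-\<open>p\<close> digit: \<open>p \<cdot> \<delta>\<^sup>-\<^sup>1 u = u + M (u mod p)\<close>. Summing over \<open>D\<close> and
  dividing by \<open>M\<close> gives \<open>\<Sum>\<^sub>d \<psi>(U)\<^sub>d d = p \<phi>\<^sub>U(-1) - \<phi>\<^sub>U(0)\<close>, so all \<open>V \<in> V(e,e')\<close> have the same
  vector \<open>\<Sum>\<^sub>d V\<^sub>d d\<close>. Hence replacing the last digits of a minimal \<open>U\<close> by those of another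
  minimal \<open>U'\<close> gives again an element of \<open>E\<close>, whose digit sum exceeds that of \<open>U\<close> by
  \<open>w(\<psi> U') - w(\<psi> U)\<close>; minimality of \<open>U\<close> makes this nonnegative, and symmetry concludes.\<close>

lemma digsum_eq_sum_atMost:
  assumes "p \<ge> 2" and "N \<ge> k"
  shows "(\<Sum>i\<le>N. (k div p^i) mod p) = digsum p k"
proof -
  have vanish: "(k div p^i) mod p = 0" if "i > k" for i
  proof -
    have "k < i" using that .
    also have "i < 2^i" by (rule less_exp)
    also have "2^i \<le> p^i" using assms(1) by (simp add: power_mono)
    finally show ?thesis by simp
  qed
  have "{..N} = {..k} \<union> {k<..N}" using assms(2) by auto
  then have "(\<Sum>i\<le>N. (k div p^i) mod p)
      = (\<Sum>i\<le>k. (k div p^i) mod p) + (\<Sum>i\<in>{k<..N}. (k div p^i) mod p)"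
    by (simp add: sum.union_disjoint ivl_disj_int)
  also have "(\<Sum>i\<in>{k<..N}. (k div p^i) mod p) = 0" using vanish by simp
  finally show ?thesis by (simp add: digsum_def)
qed

lemma digsum_mod_div:
  assumes p: "p \<ge> 2"
  shows "digsum p k = k mod p + digsum p (k div p)"
proof (cases k)
  case 0
  then show ?thesis by (simp add: digsum_def)
next
  case (Suc m)
  have "digsum p k = (\<Sum>i\<le>Suc m. (k div p^i) mod p)" by (simp add: digsum_def Suc)
  also have "\<dots> = k mod p + (\<Sum>i\<le>m. ((k div p) div p^i) mod p)"
    using sum.atMost_Suc_shift[of "\<lambda>i. (k div p^i) mod p" m] by (simp add: div_mult2_eq)
  also have "(\<Sum>i\<le>m. ((k div p) div p^i) mod p) = digsum p (k div p)"
  proof (rule digsum_eq_sum_atMost[OF p])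
    have "k div p < k" using p Suc by simp
    then show "k div p \<le> m" using Suc by simp
  qed
  finally show ?thesis .
qed

lemma digsum_mult_add:
  assumes "p \<ge> 2" and "a < p"
  shows "digsum p (p * q + a) = digsum p q + a"
  using digsum_mod_div[OF assms(1), of "p * q + a"] assms by simp

lemma power_minus_one_mod_base:
  fixes p :: nat
  assumes "p \<ge> 2" and "r \<ge> 1"
  shows "(p^r - 1) mod p = p - 1"
proof -
  have "p^r - 1 = (p - 1) + p * (p^(r - 1) - 1)"
    using assms by (cases r) (auto simp: algebra_simps Suc_le_eq)
  also have "((p - 1) + p * (p^(r - 1) - 1)) mod p = p - 1"
    using assms(1) by (subst mod_mult_self2) simp
  finally show ?thesis .
qed

lemma coprime_power_minus_one_base:
  fixes p :: nat
  assumes "p \<ge> 2" and "r \<ge> 1"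
  shows "coprime (p^r - 1) p"
proof -
  have "coprime ((p^r - 1) mod p) p"
    unfolding power_minus_one_mod_base[OF assms] using coprime_diff_one_left_nat[of p] assms(1) by simp
  then show ?thesis using assms(1) by (simp add: coprime_mod_left_iff)
qed

lemma funpow_shift:
  assumes p: "p \<ge> 2" and r: "r \<ge> 1" and x: "x \<le> p^r - 1"
  shows "(shift p r ^^ j) x = (if x = p^r - 1 then x else p^j * x mod (p^r - 1))"
proof (induction j)
  case 0
  then show ?case using x by auto
next
  case (Suc j)
  have "p^r \<ge> 2" using one_less_power[of p r] p r by simp
  then have "p^j * x mod (p^r - 1) \<le> p^r - 2"
    using mod_less_divisor[of "p^r - 1" "p^j * x"] by linarith
  then show ?case using Suc \<open>p^r \<ge> 2\<close>
    by (auto simp: shift_def mod_mult_right_eq mult.assoc)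
qed

lemma funpow_shift_le:
  assumes "p \<ge> 2" and "r \<ge> 1" and "x \<le> p^r - 1"
  shows "(shift p r ^^ j) x \<le> p^r - 1"
  using funpow_shift[OF assms, of j] assms(3) by (simp add: less_imp_le)

lemma funpow_shift_period:
  assumes p: "p \<ge> 2" and r: "r \<ge> 1" and x: "x \<le> p^r - 1"
  shows "(shift p r ^^ r) x = x"
proof (cases "x = p^r - 1")
  case True
  then show ?thesis using funpow_shift[OF assms, of r] by simp
next
  case False
  have "p^r \<ge> 2" using one_less_power[of p r] p r by simp
  then have "p^r * x = (p^r - 1) * x + x" by (simp add: algebra_simps)
  then have "p^r * x mod (p^r - 1) = x" using False x by simp
  then show ?thesis using funpow_shift[OF assms, of r] False by simp
qed

lemma mult_base_eq_shift_plus_carry: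
  assumes p: "p \<ge> 2" and r: "r \<ge> 1" and y: "y \<le> p^r - 1"
  shows "p * y = shift p r y + (p^r - 1) * (shift p r y mod p)"
proof -
  define M where "M = p^r - 1"
  have pr: "p^r \<ge> 2" using one_less_power[of p r] p r by simp
  have M_mod: "M mod p = p - 1" unfolding M_def by (rule power_minus_one_mod_base[OF p r])
  show ?thesis
  proof (cases "y = M")
    case True
    then have "shift p r y = M" by (simp add: shift_def M_def)
    moreover have "p * M = M + M * (p - 1)" using p by (cases p) (simp_all add: algebra_simps)
    ultimately have "p * y = shift p r y + M * (shift p r y mod p)" using True M_mod by simp
    then show ?thesis unfolding M_def .
  next
    case False
    then have "y \<le> p^r - 2" using y pr unfolding M_def by linarith
    then have shift_y: "shift p r y = p * y mod M" by (simp add: shift_def M_def)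
    define x c where "x = p * y mod M" and "c = p * y div M"
    have px: "p * y = x + M * c" unfolding x_def c_def by simp
    have "p * y < p * M" using False y p unfolding M_def by simp
    then have c_lt: "c < p" unfolding c_def using pr M_def
      by (simp add: div_less_iff_less_mult mult.commute)
    have "p^r = M + 1" using pr M_def by simp
    then have "x + p^r * c = p * y + c" using px by (simp add: algebra_simps)
    then have "(x + p^r * c) mod p = c" using c_lt by (metis mod_less mod_mult_self4)
    moreover have "(x + p^r * c) mod p = x mod p"
      using r by (cases r) (simp_all add: mult.assoc)
    ultimately have "x mod p = c" by simp
    then have "p * y = shift p r y + M * (shift p r y mod p)" using px shift_y[folded x_def] by simp
    then show ?thesis unfolding M_def .
  qed
qed

lemma funpow_shiftU: "(shiftU p r ^^ j) U = (\<lambda>d. (shift p r ^^ j) (U d))"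
  by (induction j) (auto simp: shiftU_def)

lemma minimal_sp_le:
  assumes "minimal n D p r U" and "inE n D p r U'" and "p \<ge> 2"
  shows "sp p D U \<le> sp p D U'"
proof -
  define S where "S = {real (sp p D U) / real r | r U. inE n D p r U}"
  have "real (sp p D U') / real r \<in> S" unfolding S_def using assms(2) by blast
  moreover have "bdd_below S" unfolding S_def by (rule bdd_belowI[of _ 0]) auto
  ultimately have Inf_le: "Inf S \<le> real (sp p D U') / real r" by (rule cInf_lower)
  have r: "r \<ge> 1" using assms(2) by (simp add: inE_def)
  have "real (sp p D U) = real (p - 1) * real r * (Inf S / real (p - 1))"
    using assms(1) by (simp add: minimal_def delta_def S_def)
  also have "\<dots> = real r * Inf S" using assms(3) by simp
  also have "\<dots> \<le> real r * (real (sp p D U') / real r)"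
    by (intro mult_left_mono Inf_le) simp
  also have "\<dots> = real (sp p D U')" using r by simp
  finally show ?thesis by simp
qed

lemma vsum_psi_eq_phi:
  assumes U: "inE n D p r U" and p: "p \<ge> 2" and i: "i < n"
  shows "vsum D (psi p U) i + phi D p r U 0 i = p * phi D p r U (r - 1) i"
proof -
  define M where "M = p^r - 1"
  have r: "r \<ge> 1" and U_le: "\<And>d. d \<in> D \<Longrightarrow> U d \<le> M" and M_dvd_U: "M dvd vsum D U i"
    using U i by (auto simp: inE_def M_def)
  have "M > 0" using one_less_power[of p r] p r by (simp add: M_def)
  define W where "W = (\<lambda>d. (shift p r ^^ (r - 1)) (U d))"
  have W_digit: "p * W d = U d + M * (U d mod p)" if d: "d \<in> D" for d
  proof -
    have "shift p r (W d) = (shift p r ^^ r) (U d)" unfolding W_def using r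
      by (metis Suc_diff_le diff_Suc_1 funpow.simps(2) o_apply)
    also have "\<dots> = U d" using funpow_shift_period[OF p r U_le[OF d, unfolded M_def]] .
    finally show ?thesis
      using mult_base_eq_shift_plus_carry[OF p r funpow_shift_le[OF p r U_le[OF d, unfolded M_def]]]
      unfolding W_def M_def by simp
  qed
  have W_sum: "p * vsum D W i = vsum D U i + M * vsum D (psi p U) i"
  proof -
    have "p * vsum D W i = (\<Sum>d\<in>D. (U d + M * (U d mod p)) * d i)"
      unfolding vsum_def sum_distrib_left by (intro sum.cong) (auto simp: W_digit mult.assoc[symmetric])
    then show ?thesis
      unfolding vsum_def psi_def by (simp add: sum_distrib_left sum.distrib algebra_simps)
  qed
  have "M dvd p * vsum D W i" using W_sum M_dvd_U by simp
  then have "M dvd vsum D W i"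
    using coprime_dvd_mult_right_iff[OF coprime_power_minus_one_base[OF p r]] by (simp add: M_def)
  then obtain a where a: "vsum D W i = M * a" by blast
  obtain b where b: "vsum D U i = M * b" using M_dvd_U by blast
  have "M * (p * a) = M * (b + vsum D (psi p U) i)" using W_sum a b by (simp add: algebra_simps)
  then have "p * a = b + vsum D (psi p U) i" using \<open>M > 0\<close> by simp
  moreover have "phi D p r U (r - 1) i = a" and "phi D p r U 0 i = b"
    using a b r \<open>M > 0\<close> by (simp_all add: phi_def funpow_shiftU W_def M_def)
  ultimately show ?thesis by simp
qed

definition replace_last_digits :: "nat \<Rightarrow> ((nat \<Rightarrow> nat) \<Rightarrow> nat) \<Rightarrow> ((nat \<Rightarrow> nat) \<Rightarrow> nat)
    \<Rightarrow> ((nat \<Rightarrow> nat) \<Rightarrow> nat)" where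
  "replace_last_digits p U U' = (\<lambda>d. p * (U d div p) + U' d mod p)"

lemma replace_last_digits_add:
  "replace_last_digits p U U' d + psi p U d = U d + psi p U' d"
  using div_mult_mod_eq[of "U d" p] by (simp add: replace_last_digits_def psi_def algebra_simps)

lemma inE_replace_last_digits:
  assumes U: "inE n D p r U" and U': "inE n D p r' U'" and p: "p \<ge> 2"
    and same_psi: "\<And>i. i < n \<Longrightarrow> vsum D (psi p U) i = vsum D (psi p U') i"
  shows "inE n D p r (replace_last_digits p U U')"
  unfolding inE_def
proof (intro conjI ballI allI impI)
  show "1 \<le> r" using U by (simp add: inE_def)
  then obtain s where r: "r = Suc s" by (cases r) auto
  fix d assume "d \<in> D"
  then have "U d \<le> p^r - 1" using U by (simp add: inE_def)
  moreover have "p^r > 0" using p by simp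
  moreover have "p^r = p * p^s" using r by simp
  ultimately have "U d < p * p^s" by linarith
  then have "U d div p + 1 \<le> p^s" by (simp add: less_mult_imp_div_less mult.commute Suc_le_eq)
  then have "p * (U d div p + 1) \<le> p * p^s" by (rule mult_le_mono2)
  then have "p * (U d div p) + p \<le> p^r" using r by (simp add: distrib_left)
  moreover have "U' d mod p < p" using p by simp
  ultimately have "replace_last_digits p U U' d < p^r" by (simp add: replace_last_digits_def)
  then show "replace_last_digits p U U' d \<le> p^r - 1" by simp
next
  fix d assume "d \<notin> D"
  then show "replace_last_digits p U U' d = 0" using U U' by (simp add: inE_def replace_last_digits_def)
next
  fix i assume i: "i < n"
  have "vsum D (replace_last_digits p U U') i + vsum D (psi p U) i = vsum D U i + vsum D (psi p U') i"
    unfolding vsum_def by (simp add: sum.distrib[symmetric] distrib_right[symmetric] replace_last_digits_add)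
  then have "vsum D (replace_last_digits p U U') i = vsum D U i" using same_psi[OF i] by simp
  then show "(p^r - 1) dvd vsum D (replace_last_digits p U U') i"
    and "0 < vsum D (replace_last_digits p U U') i" using U i by (simp_all add: inE_def)
qed

lemma sp_replace_last_digits:
  assumes "p \<ge> 2"
  shows "sp p D (replace_last_digits p U U') + weight D (psi p U) = sp p D U + weight D (psi p U')"
proof -
  have "digsum p (replace_last_digits p U U' d) + U d mod p = digsum p (U d) + U' d mod p" for d
    using digsum_mult_add[OF assms, of "U' d mod p" "U d div p"] digsum_mod_div[OF assms, of "U d"] assms
    by (simp add: replace_last_digits_def)
  then show ?thesis unfolding sp_def weight_def psi_def by (simp add: sum.distrib[symmetric])
qed

lemma minimal_weight_psi_le:
  assumes U: "minimal n D p r U" and U': "inE n D p r' U'" and p: "p \<ge> 2"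
    and last: "phi D p r U (r - 1) = phi D p r' U' (r' - 1)"
    and first: "phi D p r U 0 = phi D p r' U' 0"
  shows "weight D (psi p U) \<le> weight D (psi p U')"
proof -
  have U_E: "inE n D p r U" using U by (simp add: minimal_def)
  have "vsum D (psi p U) i = vsum D (psi p U') i" if "i < n" for i
    using vsum_psi_eq_phi[OF U_E p that] vsum_psi_eq_phi[OF U' p that] last first by simp
  then have "sp p D U \<le> sp p D (replace_last_digits p U U')"
    using minimal_sp_le[OF U inE_replace_last_digits[OF U_E U' p] p] by blast
  then show ?thesis using sp_replace_last_digits[OF p, of D U U'] by simp
qed

theorem lemma2p15:
  fixes n p :: nat and D :: "(nat \<Rightarrow> nat) set" and e e' :: "nat \<Rightarrow> nat"
  assumes "finite D"
    and "\<forall>d\<in>D. \<forall>i\<ge>n. d i = 0"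
    and "\<forall>i<n. \<exists>d\<in>D. d i \<noteq> 0"
    and "prime p"
    and "e \<in> Sigma_p n D p" and "e' \<in> Sigma_p n D p"
    and "Vset n D p e e' \<noteq> {}"
  shows "\<forall>V\<in>Vset n D p e e'. \<forall>V'\<in>Vset n D p e e'. weight D V = weight D V'"
proof (intro ballI)
  have p: "p \<ge> 2" using \<open>prime p\<close> prime_ge_2_nat by blast
  fix V V' assume "V \<in> Vset n D p e e'" and "V' \<in> Vset n D p e e'"
  then obtain r U r' U' where
      V: "V = psi p U" "minimal n D p r U" "phi D p r U (r - 1) = e" "phi D p r U 0 = e'" and
      V': "V' = psi p U'" "minimal n D p r' U'" "phi D p r' U' (r' - 1) = e" "phi D p r' U' 0 = e'"
    unfolding Vset_def MI_def by blast
  have "inE n D p r U" and "inE n D p r' U'" using V(2) V'(2) by (simp_all add: minimal_def)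
  then have "weight D V \<le> weight D V'" and "weight D V' \<le> weight D V"
    using minimal_weight_psi_le[OF V(2) _ p] minimal_weight_psi_le[OF V'(2) _ p] V V' by simp_all
  then show "weight D V = weight D V'" by simp
qed

end
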